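(* Let $\mathcal{A}$ be an $l$-visibly simple $*$-algebra of operators on a tensor product of finite-dimensional Hilbert spaces indexed by the sites of a metric space. Let $O$ be any operator (not necessarily in $\mathcal{A}$). If there exists $X\in\mathcal{A}$ supported on a set $S$ such that $\mathrm{tr}(XO)\,\mathrm{tr}(I)\ne\mathrm{tr}(X)\,\mathrm{tr}(O)$, then there is an operator $P\in\mathcal{A}$ supported on the set of sites within distance $l$ of $S$ such that $[O,P]\ne0$.
   Context: An operator is supported on a set $S$ if it equals an operator on $\bigotimes_{x\in S}\mathcal{H}_x$ tensored with the identity; the support is the minimal such set (scalars have empty support). $\mathcal{A}$ is $l$-visibly simple if for every $O\in\mathcal{A}$ and every site $x$ in the support of $O$ there is $P\in\mathcal{A}$ supported within distance $l$ of $x$ with $[O,P]\ne0$. *)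

theory Defs
  imports "HOL-Analysis.Analysis"
begin

text \<open>Sites: a finite set Lam of points of a metric space of type 'a.
  The local Hilbert space at site x is C^(d x).  The tensor product has the
  orthonormal basis of configurations s (with s x < d x on sites, s x = 0 off sites).
  An operator is its matrix w.r.t. this basis; entries outside configurations are 0.\<close>

type_synonym 'a cfg = "'a \<Rightarrow> nat"
type_synonym 'a qop = "'a cfg \<Rightarrow> 'a cfg \<Rightarrow> complex"

definition confs :: "'a set \<Rightarrow> ('a \<Rightarrow> nat) \<Rightarrow> 'a cfg set" where
  "confs Lam d = {s. (\<forall>x\<in>Lam. s x < d x) \<and> (\<forall>x. x \<notin> Lam \<longrightarrow> s x = 0)}"

definition ops :: "'a set \<Rightarrow> ('a \<Rightarrow> nat) \<Rightarrow> 'a qop set" where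
  "ops Lam d = {Q. \<forall>s t. s \<notin> confs Lam d \<or> t \<notin> confs Lam d \<longrightarrow> Q s t = 0}"

definition op_mult :: "'a set \<Rightarrow> ('a \<Rightarrow> nat) \<Rightarrow> 'a qop \<Rightarrow> 'a qop \<Rightarrow> 'a qop" where
  "op_mult Lam d Q P = (\<lambda>s t. \<Sum>u\<in>confs Lam d. Q s u * P u t)"

definition op_add :: "'a qop \<Rightarrow> 'a qop \<Rightarrow> 'a qop" where
  "op_add Q P = (\<lambda>s t. Q s t + P s t)"

definition op_smult :: "complex \<Rightarrow> 'a qop \<Rightarrow> 'a qop" where
  "op_smult c Q = (\<lambda>s t. c * Q s t)"

definition op_adj :: "'a qop \<Rightarrow> 'a qop" where
  "op_adj Q = (\<lambda>s t. cnj (Q t s))"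

definition op_id :: "'a set \<Rightarrow> ('a \<Rightarrow> nat) \<Rightarrow> 'a qop" where
  "op_id Lam d = (\<lambda>s t. if s \<in> confs Lam d \<and> s = t then 1 else 0)"

definition op_trace :: "'a set \<Rightarrow> ('a \<Rightarrow> nat) \<Rightarrow> 'a qop \<Rightarrow> complex" where
  "op_trace Lam d Q = (\<Sum>s\<in>confs Lam d. Q s s)"

definition commutator :: "'a set \<Rightarrow> ('a \<Rightarrow> nat) \<Rightarrow> 'a qop \<Rightarrow> 'a qop \<Rightarrow> 'a qop" where
  "commutator Lam d Q P = (\<lambda>s t. op_mult Lam d Q P s t - op_mult Lam d P Q s t)"

definition zero_op :: "'a qop" where
  "zero_op = (\<lambda>s t. 0)"

definition restr :: "'a cfg \<Rightarrow> 'a set \<Rightarrow> 'a cfg" where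
  "restr s S = (\<lambda>x. if x \<in> S then s x else 0)"

text \<open>Q is supported on S: Q = A \<otimes> I with A acting on the factors in S.\<close>
definition supported_on :: "'a set \<Rightarrow> ('a \<Rightarrow> nat) \<Rightarrow> 'a qop \<Rightarrow> 'a set \<Rightarrow> bool" where
  "supported_on Lam d Q S \<longleftrightarrow> (\<exists>A :: 'a qop. \<forall>s\<in>confs Lam d. \<forall>t\<in>confs Lam d.
      Q s t = (if (\<forall>x\<in>Lam - S. s x = t x) then A (restr s S) (restr t S) else 0))"

definition support :: "'a set \<Rightarrow> ('a \<Rightarrow> nat) \<Rightarrow> 'a qop \<Rightarrow> 'a set" where
  "support Lam d Q = \<Inter>{S. S \<subseteq> Lam \<and> supported_on Lam d Q S}"

definition nbhd :: "'a::metric_space set \<Rightarrow> real \<Rightarrow> 'a set \<Rightarrow> 'a set" where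
  "nbhd Lam l S = {y\<in>Lam. \<exists>x\<in>S. dist x y \<le> l}"

definition star_algebra :: "'a set \<Rightarrow> ('a \<Rightarrow> nat) \<Rightarrow> 'a qop set \<Rightarrow> bool" where
  "star_algebra Lam d A \<longleftrightarrow> A \<subseteq> ops Lam d \<and> zero_op \<in> A \<and>
     (\<forall>Q\<in>A. \<forall>P\<in>A. op_add Q P \<in> A) \<and>
     (\<forall>c. \<forall>Q\<in>A. op_smult c Q \<in> A) \<and>
     (\<forall>Q\<in>A. \<forall>P\<in>A. op_mult Lam d Q P \<in> A) \<and>
     (\<forall>Q\<in>A. op_adj Q \<in> A)"

definition visibly_simple :: "'a::metric_space set \<Rightarrow> ('a \<Rightarrow> nat) \<Rightarrow> real \<Rightarrow> 'a qop set \<Rightarrow> bool" where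
  "visibly_simple Lam d l A \<longleftrightarrow> (\<forall>Q\<in>A. \<forall>x\<in>support Lam d Q. \<exists>P\<in>A.
      supported_on Lam d P (nbhd Lam l {x}) \<and> commutator Lam d Q P \<noteq> zero_op)"

end

(*
  Suppose Q commutes with every element of A supported within distance l of S. These elements
  form a *-algebra B, and the orthogonal projection Y of Q (for the Hilbert-Schmidt inner
  product) onto B + C I still commutes with B: for b in B the commutator [Y, b] lies in B + C I
  and is orthogonal to it. Write Y = P + c I with P in B. By visible simplicity no site x of S
  lies in the support of P, since an element of A near x would belong to B and fail to commute
  with P; so P is supported off S, where traces factorize: tr(XP) tr(I) = tr(X) tr(P). As X and
  I lie in B + C I, tr(XQ) = tr(XY) and tr(Q) = tr(Y), whence tr(XQ) tr(I) = tr(X) tr(Q).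
  For l < 0 all neighbourhoods are empty and visible simplicity makes every element of A scalar.
*)
theory Submission
  imports Defs "HOL-Library.Function_Algebras"
begin

interpretation op_vec: vector_space "op_smult :: complex \<Rightarrow> 'a qop \<Rightarrow> 'a qop"
  by unfold_locales (auto simp: op_smult_def fun_eq_iff algebra_simps)

lemma op_add_eq_plus [simp]: "op_add Q P = Q + P"
  by (simp add: op_add_def fun_eq_iff)

lemma zero_op_eq_zero [simp]: "zero_op = 0"
  by (simp add: zero_op_def fun_eq_iff)

lemma finite_confs:
  assumes "finite Lam"
  shows "finite (confs Lam d)"
proof -
  have "confs Lam d \<subseteq> {s. \<forall>x. (x \<in> Lam \<longrightarrow> s x \<in> {..<Max (d ` Lam)}) \<and> (x \<notin> Lam \<longrightarrow> s x = 0)}"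
    using assms by (auto simp: confs_def less_le_trans)
  then show ?thesis
    using finite_set_of_finite_funs[OF assms finite_lessThan] by (rule finite_subset)
qed

lemma confs_outside: "s \<in> confs Lam d \<Longrightarrow> x \<notin> Lam \<Longrightarrow> s x = 0"
  unfolding confs_def by auto

lemma opsD: "Q \<in> ops Lam d \<Longrightarrow> s \<notin> confs Lam d \<or> t \<notin> confs Lam d \<Longrightarrow> Q s t = 0"
  unfolding ops_def by auto

lemma op_id_in_ops: "op_id Lam d \<in> ops Lam d"
  unfolding ops_def op_id_def by auto

lemma ops_subspace: "op_vec.subspace (ops Lam d)"
  unfolding op_vec.subspace_def ops_def op_smult_def by auto

lemma star_algebra_subspace: "star_algebra Lam d B \<Longrightarrow> op_vec.subspace B"
  unfolding star_algebra_def op_vec.subspace_def by auto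

lemma op_mult_assoc: "op_mult Lam d (op_mult Lam d P Q) R = op_mult Lam d P (op_mult Lam d Q R)"
proof (intro ext)
  fix s t
  have "op_mult Lam d (op_mult Lam d P Q) R s t
      = (\<Sum>v\<in>confs Lam d. \<Sum>u\<in>confs Lam d. P s u * Q u v * R v t)"
    unfolding op_mult_def by (simp add: sum_distrib_right)
  also have "\<dots> = (\<Sum>u\<in>confs Lam d. \<Sum>v\<in>confs Lam d. P s u * Q u v * R v t)"
    by (rule sum.swap)
  also have "\<dots> = op_mult Lam d P (op_mult Lam d Q R) s t"
    unfolding op_mult_def by (simp add: sum_distrib_left mult.assoc)
  finally show "op_mult Lam d (op_mult Lam d P Q) R s t = op_mult Lam d P (op_mult Lam d Q R) s t" .
qed

lemma op_mult_add_left: "op_mult Lam d (P + Q) R = op_mult Lam d P R + op_mult Lam d Q R"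
  unfolding op_mult_def by (simp add: fun_eq_iff distrib_right sum.distrib)

lemma op_mult_add_right: "op_mult Lam d R (P + Q) = op_mult Lam d R P + op_mult Lam d R Q"
  unfolding op_mult_def by (simp add: fun_eq_iff distrib_left sum.distrib)

lemma op_mult_diff_right: "op_mult Lam d R (P - Q) = op_mult Lam d R P - op_mult Lam d R Q"
  unfolding op_mult_def by (simp add: fun_eq_iff right_diff_distrib sum_subtractf)

lemma op_mult_smult_left: "op_mult Lam d (op_smult c P) R = op_smult c (op_mult Lam d P R)"
  unfolding op_mult_def op_smult_def by (simp add: fun_eq_iff sum_distrib_left mult.assoc)

lemma op_mult_smult_right: "op_mult Lam d R (op_smult c P) = op_smult c (op_mult Lam d R P)"
  unfolding op_mult_def op_smult_def
  by (simp add: fun_eq_iff sum_distrib_left mult.assoc mult.left_commute)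

lemma op_mult_id_left:
  assumes "finite Lam" "P \<in> ops Lam d"
  shows "op_mult Lam d (op_id Lam d) P = P"
proof (intro ext)
  fix s t
  have "op_mult Lam d (op_id Lam d) P s t
      = (\<Sum>u\<in>confs Lam d. if s = u then (if s \<in> confs Lam d then P s t else 0) else 0)"
    unfolding op_mult_def op_id_def by (rule sum.cong) auto
  then show "op_mult Lam d (op_id Lam d) P s t = P s t"
    using opsD[OF assms(2), of s t] by (simp add: finite_confs[OF assms(1)])
qed

lemma op_mult_id_right:
  assumes "finite Lam" "P \<in> ops Lam d"
  shows "op_mult Lam d P (op_id Lam d) = P"
proof (intro ext)
  fix s t
  have "op_mult Lam d P (op_id Lam d) s t
      = (\<Sum>u\<in>confs Lam d. if u = t then (if t \<in> confs Lam d then P s t else 0) else 0)"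
    unfolding op_mult_def op_id_def by (rule sum.cong) auto
  then show "op_mult Lam d P (op_id Lam d) s t = P s t"
    using opsD[OF assms(2), of s t] by (simp add: finite_confs[OF assms(1)])
qed

lemma op_mult_plus_smult_id_left:
  assumes "finite Lam" "F \<in> ops Lam d"
  shows "op_mult Lam d (P + op_smult c (op_id Lam d)) F = op_mult Lam d P F + op_smult c F"
  using assms by (simp add: op_mult_add_left op_mult_smult_left op_mult_id_left)

lemma op_mult_plus_smult_id_right:
  assumes "finite Lam" "F \<in> ops Lam d"
  shows "op_mult Lam d F (P + op_smult c (op_id Lam d)) = op_mult Lam d F P + op_smult c F"
  using assms by (simp add: op_mult_add_right op_mult_smult_right op_mult_id_right)

lemma op_mult_plus_smult_id_commute_iff:
  assumes "finite Lam" "F \<in> ops Lam d"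
  shows "op_mult Lam d (P + op_smult c (op_id Lam d)) F = op_mult Lam d F (P + op_smult c (op_id Lam d))
    \<longleftrightarrow> op_mult Lam d P F = op_mult Lam d F P"
  using assms by (simp add: op_mult_plus_smult_id_left op_mult_plus_smult_id_right)

lemma op_adj_mult: "op_adj (op_mult Lam d P Q) = op_mult Lam d (op_adj Q) (op_adj P)"
  unfolding op_adj_def op_mult_def by (simp add: fun_eq_iff mult.commute)

lemma op_adj_adj [simp]: "op_adj (op_adj P) = P"
  unfolding op_adj_def by simp

lemma op_adj_id [simp]: "op_adj (op_id Lam d) = op_id Lam d"
  unfolding op_adj_def op_id_def by (intro ext) auto

lemma op_adj_add [simp]: "op_adj (P + Q) = op_adj P + op_adj Q"
  unfolding op_adj_def by (simp add: fun_eq_iff)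

lemma op_adj_smult [simp]: "op_adj (op_smult c P) = op_smult (cnj c) (op_adj P)"
  unfolding op_adj_def op_smult_def by (simp add: fun_eq_iff)

lemma op_trace_add: "op_trace Lam d (P + Q) = op_trace Lam d P + op_trace Lam d Q"
  unfolding op_trace_def by (simp add: sum.distrib)

lemma op_trace_diff: "op_trace Lam d (P - Q) = op_trace Lam d P - op_trace Lam d Q"
  unfolding op_trace_def by (simp add: sum_subtractf)

lemma op_trace_smult: "op_trace Lam d (op_smult c P) = c * op_trace Lam d P"
  unfolding op_trace_def op_smult_def by (simp add: sum_distrib_left)

lemma op_trace_mult_commute: "op_trace Lam d (op_mult Lam d P Q) = op_trace Lam d (op_mult Lam d Q P)"
  unfolding op_trace_def op_mult_def by (subst sum.swap) (simp add: mult.commute)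

lemma commutator_eq_zero_iff:
  "commutator Lam d Q P = zero_op \<longleftrightarrow> op_mult Lam d Q P = op_mult Lam d P Q"
  unfolding commutator_def zero_op_def by (auto simp: fun_eq_iff)

lemma sum_fun_apply: "sum f A x = (\<Sum>i\<in>A. f i x)"
  by (induction A rule: infinite_finite_induct) simp_all

lemma ops_finite_dimensional:
  assumes "finite Lam"
  obtains E where "finite E" "ops Lam d \<subseteq> op_vec.span E"
proof
  let ?unit = "\<lambda>(s, t) a b. if a = s \<and> b = t then 1 else (0::complex)"
  let ?CC = "confs Lam d \<times> confs Lam d"
  show "finite (?unit ` ?CC)"
    using finite_confs[OF assms] by simp
  show "ops Lam d \<subseteq> op_vec.span (?unit ` ?CC)"
  proof
    fix F assume F: "F \<in> ops Lam d"
    have "F = (\<Sum>p\<in>?CC. op_smult (F (fst p) (snd p)) (?unit p))"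
    proof (intro ext)
      fix a b
      have "(\<Sum>p\<in>?CC. op_smult (F (fst p) (snd p)) (?unit p)) a b
          = (\<Sum>p\<in>?CC. if p = (a, b) then F a b else 0)"
        by (simp add: sum_fun_apply op_smult_def) (rule sum.cong; auto split: if_split_asm)
      also have "\<dots> = F a b"
        using opsD[OF F, of a b] finite_confs[OF assms] by (simp add: sum.delta)
      finally show "F a b = (\<Sum>p\<in>?CC. op_smult (F (fst p) (snd p)) (?unit p)) a b" by simp
    qed
    also have "\<dots> \<in> op_vec.span (?unit ` ?CC)"
      by (intro op_vec.span_sum op_vec.span_scale op_vec.span_base) auto
    finally show "F \<in> op_vec.span (?unit ` ?CC)" .
  qed
qed

section \<open>The Hilbert--Schmidt inner product and orthogonal projections\<close>

definition hs_inner :: "'a set \<Rightarrow> ('a \<Rightarrow> nat) \<Rightarrow> 'a qop \<Rightarrow> 'a qop \<Rightarrow> complex" where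
  "hs_inner Lam d F G = op_trace Lam d (op_mult Lam d (op_adj F) G)"

lemma hs_inner_add_left: "hs_inner Lam d (F + G) H = hs_inner Lam d F H + hs_inner Lam d G H"
  unfolding hs_inner_def by (simp add: op_mult_add_left op_trace_add)

lemma hs_inner_smult_left: "hs_inner Lam d (op_smult c F) H = cnj c * hs_inner Lam d F H"
  unfolding hs_inner_def by (simp add: op_mult_smult_left op_trace_smult)

lemma hs_inner_zero_left: "hs_inner Lam d 0 H = 0"
  unfolding hs_inner_def op_trace_def op_mult_def op_adj_def by simp

lemma hs_inner_zero_right: "hs_inner Lam d H 0 = 0"
  unfolding hs_inner_def op_trace_def op_mult_def by simp

lemma hs_inner_diff_right: "hs_inner Lam d H (F - G) = hs_inner Lam d H F - hs_inner Lam d H G"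
  unfolding hs_inner_def by (simp add: op_mult_diff_right op_trace_diff)

lemma hs_inner_smult_right: "hs_inner Lam d H (op_smult c F) = c * hs_inner Lam d H F"
  unfolding hs_inner_def by (simp add: op_mult_smult_right op_trace_smult)

lemma hs_inner_adj_left: "hs_inner Lam d (op_adj X) F = op_trace Lam d (op_mult Lam d X F)"
  unfolding hs_inner_def by simp

lemma hs_inner_mult_right: "hs_inner Lam d Z (op_mult Lam d Y b) = hs_inner Lam d (op_mult Lam d Z (op_adj b)) Y"
proof -
  have "hs_inner Lam d Z (op_mult Lam d Y b)
      = op_trace Lam d (op_mult Lam d (op_mult Lam d (op_adj Z) Y) b)"
    unfolding hs_inner_def by (simp add: op_mult_assoc)
  also have "\<dots> = op_trace Lam d (op_mult Lam d b (op_mult Lam d (op_adj Z) Y))"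
    by (rule op_trace_mult_commute)
  also have "\<dots> = hs_inner Lam d (op_mult Lam d Z (op_adj b)) Y"
    unfolding hs_inner_def by (simp add: op_mult_assoc op_adj_mult)
  finally show ?thesis .
qed

lemma hs_inner_mult_left: "hs_inner Lam d Z (op_mult Lam d b Y) = hs_inner Lam d (op_mult Lam d (op_adj b) Z) Y"
  unfolding hs_inner_def by (simp add: op_mult_assoc op_adj_mult)

lemma hs_inner_self_eq_0:
  assumes "finite Lam" "F \<in> ops Lam d" "hs_inner Lam d F F = 0"
  shows "F = 0"
proof -
  let ?C = "confs Lam d"
  have fin: "finite ?C" using finite_confs[OF assms(1)] .
  have "hs_inner Lam d F F = complex_of_real (\<Sum>s\<in>?C. \<Sum>u\<in>?C. (cmod (F u s))\<^sup>2)"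
    unfolding hs_inner_def op_trace_def op_mult_def op_adj_def of_real_sum
    by (intro sum.cong refl) (metis complex_norm_square mult.commute)
  then have "(\<Sum>s\<in>?C. \<Sum>u\<in>?C. (cmod (F u s))\<^sup>2) = 0"
    using assms(3) of_real_eq_0_iff by metis
  then have "\<forall>s\<in>?C. \<forall>u\<in>?C. F u s = 0"
    using fin by (simp add: sum_nonneg sum_nonneg_eq_0_iff)
  then show "F = 0" using opsD[OF assms(2)] by (auto simp: fun_eq_iff)
qed

lemma hs_inner_span_eq_0:
  assumes "\<forall>v\<in>F. hs_inner Lam d v R = 0" "u \<in> op_vec.span F"
  shows "hs_inner Lam d u R = 0"
proof -
  have "op_vec.subspace {v. hs_inner Lam d v R = 0}"
    by (rule op_vec.subspaceI) (simp_all add: hs_inner_add_left hs_inner_smult_left hs_inner_zero_left)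
  then show ?thesis
    using op_vec.span_minimal[of F "{v. hs_inner Lam d v R = 0}"] assms by blast
qed

text \<open>The Gram--Schmidt step: \<open>v - W\<close> is orthogonal to \<open>F\<close>, so correcting \<open>Y'\<close> along it
  keeps \<open>R - Y'\<close> orthogonal to \<open>F\<close> and makes it orthogonal to \<open>v\<close>.\<close>

lemma orthogonal_projection_insert:
  assumes "finite Lam" "F \<subseteq> ops Lam d" "v \<in> ops Lam d"
    and "Y' \<in> op_vec.span F" "\<forall>u\<in>F. hs_inner Lam d u (R - Y') = 0"
    and "W \<in> op_vec.span F" "\<forall>u\<in>F. hs_inner Lam d u (v - W) = 0"
  shows "\<exists>Y\<in>op_vec.span (insert v F). \<forall>u\<in>insert v F. hs_inner Lam d u (R - Y) = 0"
proof -
  define w where "w = v - W"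
  have span_mono: "op_vec.span F \<subseteq> op_vec.span (insert v F)"
    by (rule op_vec.span_mono) blast
  have "v \<in> op_vec.span (insert v F)" "W \<in> op_vec.span (insert v F)"
    using assms(6) span_mono by (auto intro: op_vec.span_base)
  then have w_span: "w \<in> op_vec.span (insert v F)"
    unfolding w_def by (rule op_vec.span_diff)
  show ?thesis
  proof (cases "w = 0")
    case True
    then have "hs_inner Lam d v (R - Y') = 0"
      using hs_inner_span_eq_0[OF assms(5,6)] by (simp add: w_def)
    then show ?thesis using assms(4,5) span_mono by blast
  next
    case False
    have "w \<in> ops Lam d"
      using op_vec.span_minimal[OF _ ops_subspace] assms(2,3) w_span by blast
    then have w_nonzero: "hs_inner Lam d w w \<noteq> 0"
      using hs_inner_self_eq_0[OF assms(1)] False by blast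
    define Y where "Y = Y' + op_smult (hs_inner Lam d w (R - Y') / hs_inner Lam d w w) w"
    have R_Y: "R - Y = (R - Y') - op_smult (hs_inner Lam d w (R - Y') / hs_inner Lam d w w) w"
      unfolding Y_def by simp
    have orth_F: "\<forall>u\<in>F. hs_inner Lam d u (R - Y) = 0"
      using assms(5,7) unfolding R_Y w_def by (simp add: hs_inner_diff_right hs_inner_smult_right)
    have "hs_inner Lam d w (R - Y) = 0"
      unfolding R_Y using w_nonzero by (simp add: hs_inner_diff_right hs_inner_smult_right)
    moreover have "hs_inner Lam d W (R - Y) = 0"
      using hs_inner_span_eq_0[OF orth_F assms(6)] .
    ultimately have "hs_inner Lam d v (R - Y) = 0"
      using hs_inner_add_left[of Lam d w W] by (simp add: w_def)
    moreover have "Y \<in> op_vec.span (insert v F)"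
      unfolding Y_def using assms(4) span_mono w_span by (intro op_vec.span_add op_vec.span_scale) blast+
    ultimately show ?thesis using orth_F by blast
  qed
qed

lemma orthogonal_projection_span:
  assumes "finite Lam" "finite F" "F \<subseteq> ops Lam d"
  shows "\<exists>Y\<in>op_vec.span F. \<forall>v\<in>F. hs_inner Lam d v (R - Y) = 0"
  using assms(2,3)
proof (induction F arbitrary: R rule: finite_induct)
  case empty
  then show ?case using op_vec.span_zero by blast
next
  case (insert v F)
  obtain Y' where "Y' \<in> op_vec.span F" "\<forall>u\<in>F. hs_inner Lam d u (R - Y') = 0"
    using insert by blast
  moreover obtain W where "W \<in> op_vec.span F" "\<forall>u\<in>F. hs_inner Lam d u (v - W) = 0"
    using insert by blast
  ultimately show ?case
    using orthogonal_projection_insert[OF assms(1)] insert.prems by blast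
qed

lemma orthogonal_projection_exists:
  assumes "finite Lam" "op_vec.subspace C" "C \<subseteq> ops Lam d"
  obtains Y where "Y \<in> C" "\<And>Z. Z \<in> C \<Longrightarrow> hs_inner Lam d Z Y = hs_inner Lam d Z R"
proof -
  obtain F where F: "F \<subseteq> C" "op_vec.independent F" "C \<subseteq> op_vec.span F"
    by (rule op_vec.maximal_independent_subset)
  obtain E where "finite E" "ops Lam d \<subseteq> op_vec.span E"
    using ops_finite_dimensional[OF assms(1)] .
  then have "finite F"
    using op_vec.independent_span_bound[OF _ F(2)] F(1) assms(3) by blast
  then obtain Y where Y: "Y \<in> op_vec.span F" "\<forall>v\<in>F. hs_inner Lam d v (R - Y) = 0"
    using orthogonal_projection_span[OF assms(1)] F(1) assms(3) by blast
  have span_F: "op_vec.span F = C"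
    using op_vec.span_minimal[OF F(1) assms(2)] F(3) by blast
  show ?thesis
  proof
    show "Y \<in> C" using Y(1) span_F by simp
    fix Z assume "Z \<in> C"
    then have "hs_inner Lam d Z (R - Y) = 0"
      using hs_inner_span_eq_0[OF Y(2)] span_F by simp
    then show "hs_inner Lam d Z Y = hs_inner Lam d Z R"
      by (simp add: hs_inner_diff_right)
  qed
qed

section \<open>Projections onto \<open>*\<close>-algebras\<close>

lemma star_algebra_commuting_projection:
  assumes "finite Lam" "star_algebra Lam d C" "\<forall>b\<in>C. op_mult Lam d Q b = op_mult Lam d b Q"
  obtains Y where "Y \<in> C" "\<And>Z. Z \<in> C \<Longrightarrow> hs_inner Lam d Z Y = hs_inner Lam d Z Q"
    "\<And>b. b \<in> C \<Longrightarrow> op_mult Lam d Y b = op_mult Lam d b Y"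
proof -
  have C_ops: "C \<subseteq> ops Lam d" and C_closed: "\<And>F G. F \<in> C \<Longrightarrow> G \<in> C \<Longrightarrow> op_mult Lam d F G \<in> C"
    and C_adj: "\<And>F. F \<in> C \<Longrightarrow> op_adj F \<in> C"
    using assms(2) unfolding star_algebra_def by auto
  obtain Y where Y: "Y \<in> C" "\<And>Z. Z \<in> C \<Longrightarrow> hs_inner Lam d Z Y = hs_inner Lam d Z Q"
    using orthogonal_projection_exists[OF assms(1) star_algebra_subspace[OF assms(2)] C_ops, where R = Q] by blast
  have "op_mult Lam d Y b = op_mult Lam d b Y" if b: "b \<in> C" for b
  proof -
    define D where "D = op_mult Lam d Y b - op_mult Lam d b Y"
    have D_C: "D \<in> C"
      unfolding D_def using Y(1) b C_closed star_algebra_subspace[OF assms(2)]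
      by (intro op_vec.subspace_diff) auto
    \<comment> \<open>\<open>D\<close> is orthogonal to \<open>C\<close>: move \<open>b\<close> across the inner product, replace \<open>Y\<close> by \<open>Q\<close>, and move it back.\<close>
    have "hs_inner Lam d Z D = 0" if Z: "Z \<in> C" for Z
    proof -
      have "hs_inner Lam d Z D
          = hs_inner Lam d (op_mult Lam d Z (op_adj b)) Y - hs_inner Lam d (op_mult Lam d (op_adj b) Z) Y"
        unfolding D_def hs_inner_diff_right hs_inner_mult_right[of Lam d Z Y b] hs_inner_mult_left[of Lam d Z b Y] ..
      also have "\<dots> = hs_inner Lam d (op_mult Lam d Z (op_adj b)) Q - hs_inner Lam d (op_mult Lam d (op_adj b) Z) Q"
        using Y(2) Z b C_closed C_adj by simp
      also have "\<dots> = hs_inner Lam d Z (op_mult Lam d Q b - op_mult Lam d b Q)"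
        unfolding hs_inner_diff_right hs_inner_mult_right[of Lam d Z Q b] hs_inner_mult_left[of Lam d Z b Q] ..
      finally show ?thesis using assms(3) b by (simp add: hs_inner_zero_right)
    qed
    then have "D = 0"
      using hs_inner_self_eq_0[OF assms(1)] D_C C_ops by blast
    then show ?thesis unfolding D_def by simp
  qed
  with Y that show ?thesis by blast
qed

definition unitization :: "'a set \<Rightarrow> ('a \<Rightarrow> nat) \<Rightarrow> 'a qop set \<Rightarrow> 'a qop set" where
  "unitization Lam d B = {P + op_smult c (op_id Lam d) | P c. P \<in> B}"

lemma unitizationI: "P \<in> B \<Longrightarrow> P + op_smult c (op_id Lam d) \<in> unitization Lam d B"
  unfolding unitization_def by blast

lemma unitizationE:
  assumes "F \<in> unitization Lam d B"
  obtains P c where "F = P + op_smult c (op_id Lam d)" "P \<in> B"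
  using assms unfolding unitization_def by blast

lemma subset_unitization: "B \<subseteq> unitization Lam d B"
proof
  fix P assume "P \<in> B"
  moreover have "P = P + op_smult 0 (op_id Lam d)" by (simp add: op_smult_def fun_eq_iff)
  ultimately show "P \<in> unitization Lam d B" by (metis unitizationI)
qed

lemma op_id_in_unitization: "0 \<in> B \<Longrightarrow> op_id Lam d \<in> unitization Lam d B"
proof -
  assume "0 \<in> B"
  moreover have "op_id Lam d = 0 + op_smult 1 (op_id Lam d)" by (simp add: op_smult_def fun_eq_iff)
  ultimately show ?thesis by (metis unitizationI)
qed

lemma unitization_subset_ops:
  assumes "B \<subseteq> ops Lam d"
  shows "unitization Lam d B \<subseteq> ops Lam d"
proof
  fix F assume "F \<in> unitization Lam d B"
  then obtain P c where "F = P + op_smult c (op_id Lam d)" "P \<in> B" by (rule unitizationE)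
  moreover have "op_smult c (op_id Lam d) \<in> ops Lam d"
    by (rule op_vec.subspace_scale[OF ops_subspace op_id_in_ops])
  ultimately show "F \<in> ops Lam d"
    using assms op_vec.subspace_add[OF ops_subspace] by blast
qed

lemma unitization_mult_closed:
  assumes "finite Lam" "star_algebra Lam d B" "F \<in> unitization Lam d B" "G \<in> unitization Lam d B"
  shows "op_mult Lam d F G \<in> unitization Lam d B"
proof -
  let ?I = "op_id Lam d"
  have B: "B \<subseteq> ops Lam d" "\<And>F G. F \<in> B \<Longrightarrow> G \<in> B \<Longrightarrow> F + G \<in> B"
    "\<And>c F. F \<in> B \<Longrightarrow> op_smult c F \<in> B" "\<And>F G. F \<in> B \<Longrightarrow> G \<in> B \<Longrightarrow> op_mult Lam d F G \<in> B"
    using assms(2) unfolding star_algebra_def by auto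
  obtain P1 c1 where F: "F = P1 + op_smult c1 ?I" "P1 \<in> B"
    using assms(3) by (rule unitizationE)
  obtain P2 c2 where G: "G = P2 + op_smult c2 ?I" "P2 \<in> B"
    using assms(4) by (rule unitizationE)
  have "G \<in> ops Lam d" "P1 \<in> ops Lam d"
    using assms(4) unitization_subset_ops[OF B(1)] F(2) B(1) by blast+
  have "op_mult Lam d F G = op_mult Lam d P1 P2 + op_smult c2 P1 + op_smult c1 (P2 + op_smult c2 ?I)"
    unfolding F(1) op_mult_plus_smult_id_left[OF assms(1) \<open>G \<in> ops Lam d\<close>]
    unfolding G(1) op_mult_plus_smult_id_right[OF assms(1) \<open>P1 \<in> ops Lam d\<close>] by (rule refl)
  also have "\<dots> = (op_mult Lam d P1 P2 + op_smult c2 P1 + op_smult c1 P2) + op_smult (c1 * c2) ?I"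
    by (simp add: op_smult_def fun_eq_iff algebra_simps)
  finally show ?thesis
    using F(2) G(2) B(2-4) by (simp add: unitizationI)
qed

lemma commute_unitization:
  assumes "finite Lam" "Q \<in> ops Lam d" "\<forall>b\<in>B. op_mult Lam d Q b = op_mult Lam d b Q"
    and "F \<in> unitization Lam d B"
  shows "op_mult Lam d Q F = op_mult Lam d F Q"
proof -
  obtain P c where "F = P + op_smult c (op_id Lam d)" "P \<in> B"
    using assms(4) by (rule unitizationE)
  then show ?thesis
    using assms(3) op_mult_plus_smult_id_commute_iff[OF assms(1,2)] by metis
qed

lemma star_algebra_unitization:
  assumes "finite Lam" "star_algebra Lam d B"
  shows "star_algebra Lam d (unitization Lam d B)"
proof -
  let ?I = "op_id Lam d" and ?U = "unitization Lam d B"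
  have B: "B \<subseteq> ops Lam d" "0 \<in> B" "\<And>F G. F \<in> B \<Longrightarrow> G \<in> B \<Longrightarrow> F + G \<in> B"
    "\<And>c F. F \<in> B \<Longrightarrow> op_smult c F \<in> B" "\<And>F. F \<in> B \<Longrightarrow> op_adj F \<in> B"
    using assms(2) unfolding star_algebra_def by auto
  have add: "F + G \<in> ?U" if F: "F \<in> ?U" and G: "G \<in> ?U" for F G
  proof -
    obtain P1 c1 where "F = P1 + op_smult c1 ?I" "P1 \<in> B"
      using F by (rule unitizationE)
    moreover obtain P2 c2 where "G = P2 + op_smult c2 ?I" "P2 \<in> B"
      using G by (rule unitizationE)
    ultimately
    have "F + G = (P1 + P2) + op_smult (c1 + c2) ?I" "P1 + P2 \<in> B"
      using B(3) by (simp_all add: op_smult_def fun_eq_iff algebra_simps)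
    then show ?thesis by (simp add: unitizationI)
  qed
  have smult: "op_smult c F \<in> ?U" if F: "F \<in> ?U" for c F
  proof -
    obtain P1 c1 where "F = P1 + op_smult c1 ?I" "P1 \<in> B"
      using F by (rule unitizationE)
    then have "op_smult c F = op_smult c P1 + op_smult (c * c1) ?I" "op_smult c P1 \<in> B"
      using B(4) by (simp_all add: op_smult_def fun_eq_iff algebra_simps)
    then show ?thesis by (simp add: unitizationI)
  qed
  have adj: "op_adj F \<in> ?U" if F: "F \<in> ?U" for F
  proof -
    obtain P1 c1 where "F = P1 + op_smult c1 ?I" "P1 \<in> B"
      using F by (rule unitizationE)
    then show ?thesis using B(5) by (simp add: unitizationI)
  qed
  show ?thesis
    unfolding star_algebra_def op_add_eq_plus zero_op_eq_zero
  proof (intro conjI ballI allI)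
    show "?U \<subseteq> ops Lam d" by (rule unitization_subset_ops[OF B(1)])
    show "0 \<in> ?U" using B(2) subset_unitization by blast
  qed (simp_all add: add smult adj unitization_mult_closed[OF assms])
qed

lemma commutant_conditional_expectation:
  assumes "finite Lam" "star_algebra Lam d B" "Q \<in> ops Lam d"
    and "\<forall>b\<in>B. op_mult Lam d Q b = op_mult Lam d b Q"
  obtains P c where "P \<in> B" "\<And>b. b \<in> B \<Longrightarrow> op_mult Lam d P b = op_mult Lam d b P"
    "\<And>Z. Z \<in> B \<Longrightarrow>
       op_trace Lam d (op_mult Lam d Z Q) = op_trace Lam d (op_mult Lam d Z P) + c * op_trace Lam d Z"
    "op_trace Lam d Q = op_trace Lam d P + c * op_trace Lam d (op_id Lam d)"
proof -
  let ?I = "op_id Lam d" and ?U = "unitization Lam d B"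
  have B_ops: "B \<subseteq> ops Lam d" and B_zero: "0 \<in> B" and B_adj: "\<And>F. F \<in> B \<Longrightarrow> op_adj F \<in> B"
    using assms(2) unfolding star_algebra_def by auto
  have "\<forall>F\<in>?U. op_mult Lam d Q F = op_mult Lam d F Q"
    using commute_unitization[OF assms(1,3,4)] by blast
  \<comment> \<open>The identity is added to \<open>B\<close> so that the projection also preserves the trace of \<open>Q\<close>.\<close>
  then obtain Y where Y: "Y \<in> ?U" "\<And>Z. Z \<in> ?U \<Longrightarrow> hs_inner Lam d Z Y = hs_inner Lam d Z Q"
    "\<And>b. b \<in> ?U \<Longrightarrow> op_mult Lam d Y b = op_mult Lam d b Y"
    using star_algebra_commuting_projection[OF assms(1) star_algebra_unitization[OF assms(1,2)]] by blast
  obtain P c where P: "Y = P + op_smult c ?I" "P \<in> B"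
    using Y(1) by (rule unitizationE)
  have Y_ops: "Y \<in> ops Lam d"
    using Y(1) unitization_subset_ops[OF B_ops] by blast
  show ?thesis
  proof
    show "P \<in> B" by (fact P(2))
    show "op_mult Lam d P b = op_mult Lam d b P" if "b \<in> B" for b
      using Y(3)[OF subsetD[OF subset_unitization that]]
      unfolding P(1) op_mult_plus_smult_id_commute_iff[OF assms(1) subsetD[OF B_ops that]] .
    show "op_trace Lam d (op_mult Lam d Z Q) = op_trace Lam d (op_mult Lam d Z P) + c * op_trace Lam d Z"
      if "Z \<in> B" for Z
    proof -
      have "op_trace Lam d (op_mult Lam d Z Q) = op_trace Lam d (op_mult Lam d Z Y)"
        using Y(2)[OF subsetD[OF subset_unitization B_adj[OF that]]] unfolding hs_inner_adj_left ..
      then show ?thesis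
        unfolding P(1) op_mult_plus_smult_id_right[OF assms(1) subsetD[OF B_ops that]]
        by (simp add: op_trace_add op_trace_smult)
    qed
    have "op_trace Lam d Q = op_trace Lam d Y"
      using Y(2)[OF op_id_in_unitization[OF B_zero]] Y_ops assms(1,3)
      by (simp add: hs_inner_def op_mult_id_left)
    then show "op_trace Lam d Q = op_trace Lam d P + c * op_trace Lam d ?I"
      unfolding P(1) by (simp add: op_trace_add op_trace_smult)
  qed
qed

section \<open>Supports\<close>

definition agree_outside :: "'a set \<Rightarrow> 'a set \<Rightarrow> 'a cfg \<Rightarrow> 'a cfg \<Rightarrow> bool" where
  "agree_outside Lam S s t \<longleftrightarrow> (\<forall>x\<in>Lam - S. s x = t x)"

lemma supported_on_zero_outside:
  assumes "supported_on Lam d Q S" "s \<in> confs Lam d" "t \<in> confs Lam d" "\<not> agree_outside Lam S s t"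
  shows "Q s t = 0"
  using assms unfolding supported_on_def agree_outside_def by auto

lemma supported_on_cong:
  assumes "supported_on Lam d Q S"
    and "s \<in> confs Lam d" "t \<in> confs Lam d" "s' \<in> confs Lam d" "t' \<in> confs Lam d"
    and "agree_outside Lam S s t" "agree_outside Lam S s' t'"
    and "restr s S = restr s' S" "restr t S = restr t' S"
  shows "Q s t = Q s' t'"
  using assms unfolding supported_on_def agree_outside_def by auto

lemma supported_onI:
  assumes zero: "\<And>s t. s \<in> confs Lam d \<Longrightarrow> t \<in> confs Lam d \<Longrightarrow> \<not> agree_outside Lam S s t \<Longrightarrow> Q s t = 0"
    and cong: "\<And>s t s' t'. s \<in> confs Lam d \<Longrightarrow> t \<in> confs Lam d \<Longrightarrow> s' \<in> confs Lam d \<Longrightarrow> t' \<in> confs Lam d \<Longrightarrow>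
      agree_outside Lam S s t \<Longrightarrow> agree_outside Lam S s' t' \<Longrightarrow>
      restr s S = restr s' S \<Longrightarrow> restr t S = restr t' S \<Longrightarrow> Q s t = Q s' t'"
  shows "supported_on Lam d Q S"
proof -
  define rep where "rep \<sigma> \<tau> p \<longleftrightarrow> fst p \<in> confs Lam d \<and> snd p \<in> confs Lam d
      \<and> agree_outside Lam S (fst p) (snd p) \<and> restr (fst p) S = \<sigma> \<and> restr (snd p) S = \<tau>" for \<sigma> \<tau> p
  define A where "A \<sigma> \<tau> = Q (fst (SOME p. rep \<sigma> \<tau> p)) (snd (SOME p. rep \<sigma> \<tau> p))" for \<sigma> \<tau>
  have "Q s t = (if (\<forall>x\<in>Lam - S. s x = t x) then A (restr s S) (restr t S) else 0)"
    if st: "s \<in> confs Lam d" "t \<in> confs Lam d" for s t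
  proof (cases "agree_outside Lam S s t")
    case True
    then have "rep (restr s S) (restr t S) (s, t)"
      using st by (simp add: rep_def)
    then have "rep (restr s S) (restr t S) (SOME p. rep (restr s S) (restr t S) p)"
      by (rule someI)
    then have "Q s t = Q (fst (SOME p. rep (restr s S) (restr t S) p)) (snd (SOME p. rep (restr s S) (restr t S) p))"
      unfolding rep_def by (intro cong[OF st] True) simp_all
    then have "Q s t = A (restr s S) (restr t S)"
      unfolding A_def .
    then show ?thesis using True by (simp add: agree_outside_def)
  next
    case False
    then show ?thesis using zero[OF st] unfolding agree_outside_def by auto
  qed
  then show ?thesis
    unfolding supported_on_def by (intro exI[of _ A]) blast
qed

lemma supported_on_Lam: "supported_on Lam d Q Lam"
  unfolding supported_on_def restr_def confs_def
  by (intro exI[of _ Q]) (auto intro!: arg_cong2[where f = Q])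

lemma agree_outside_sym: "agree_outside Lam S s t \<Longrightarrow> agree_outside Lam S t s"
  unfolding agree_outside_def by auto

lemma agree_outside_trans: "agree_outside Lam S s u \<Longrightarrow> agree_outside Lam S u t \<Longrightarrow> agree_outside Lam S s t"
  unfolding agree_outside_def by auto

lemma restr_eqI: "(\<And>x. x \<in> S \<Longrightarrow> s x = s' x) \<Longrightarrow> restr s S = restr s' S"
  unfolding restr_def by auto

lemma restr_eqD: "restr s S = restr s' S \<Longrightarrow> x \<in> S \<Longrightarrow> s x = s' x"
  unfolding restr_def by (drule fun_cong[of _ _ x]) simp

lemma confs_eqI:
  assumes "s \<in> confs Lam d" "t \<in> confs Lam d" "agree_outside Lam S s t" "restr s S = restr t S"
  shows "s = t"
proof
  fix x show "s x = t x"
  proof (cases "x \<in> Lam")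
    case True
    then show ?thesis
      using assms(3) restr_eqD[OF assms(4), of x] unfolding agree_outside_def by (cases "x \<in> S") auto
  next
    case False
    then show ?thesis using confs_outside[OF assms(1)] confs_outside[OF assms(2)] by simp
  qed
qed

lemma confs_eq_if_agree_outside_complement:
  assumes "s \<in> confs Lam d" "t \<in> confs Lam d" "agree_outside Lam S s t" "agree_outside Lam (Lam - S) s t"
  shows "s = t"
proof
  fix x show "s x = t x"
    using assms confs_outside[OF assms(1), of x] confs_outside[OF assms(2), of x]
    unfolding agree_outside_def by (cases "x \<in> Lam"; cases "x \<in> S") auto
qed

lemma supported_on_zero: "supported_on Lam d 0 S"
  by (rule supported_onI) simp_all

lemma supported_on_add:
  assumes "supported_on Lam d Q S" "supported_on Lam d P S"
  shows "supported_on Lam d (Q + P) S"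
proof (rule supported_onI)
  fix s t assume "s \<in> confs Lam d" "t \<in> confs Lam d" "\<not> agree_outside Lam S s t"
  then show "(Q + P) s t = 0"
    using supported_on_zero_outside[OF assms(1)] supported_on_zero_outside[OF assms(2)] by simp
next
  fix s t s' t' assume "s \<in> confs Lam d" "t \<in> confs Lam d" "s' \<in> confs Lam d" "t' \<in> confs Lam d"
    "agree_outside Lam S s t" "agree_outside Lam S s' t'" "restr s S = restr s' S" "restr t S = restr t' S"
  note hyps = this
  show "(Q + P) s t = (Q + P) s' t'"
    using supported_on_cong[OF assms(1) hyps] supported_on_cong[OF assms(2) hyps] by simp
qed

lemma supported_on_smult:
  assumes "supported_on Lam d Q S"
  shows "supported_on Lam d (op_smult c Q) S"
proof (rule supported_onI)
  fix s t assume "s \<in> confs Lam d" "t \<in> confs Lam d" "\<not> agree_outside Lam S s t"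
  then show "op_smult c Q s t = 0"
    using supported_on_zero_outside[OF assms] by (simp add: op_smult_def)
next
  fix s t s' t' assume "s \<in> confs Lam d" "t \<in> confs Lam d" "s' \<in> confs Lam d" "t' \<in> confs Lam d"
    "agree_outside Lam S s t" "agree_outside Lam S s' t'" "restr s S = restr s' S" "restr t S = restr t' S"
  note hyps = this
  show "op_smult c Q s t = op_smult c Q s' t'"
    using supported_on_cong[OF assms hyps] by (simp add: op_smult_def)
qed

lemma supported_on_adj:
  assumes "supported_on Lam d Q S"
  shows "supported_on Lam d (op_adj Q) S"
proof (rule supported_onI)
  fix s t assume "s \<in> confs Lam d" "t \<in> confs Lam d" "\<not> agree_outside Lam S s t"
  then show "op_adj Q s t = 0"
    using supported_on_zero_outside[OF assms, of t s] agree_outside_sym by (auto simp: op_adj_def)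
next
  fix s t s' t' assume "s \<in> confs Lam d" "t \<in> confs Lam d" "s' \<in> confs Lam d" "t' \<in> confs Lam d"
    "agree_outside Lam S s t" "agree_outside Lam S s' t'" "restr s S = restr s' S" "restr t S = restr t' S"
  note hyps = this
  show "op_adj Q s t = op_adj Q s' t'"
    using supported_on_cong[OF assms hyps(2,1,4,3) agree_outside_sym[OF hyps(5)]
        agree_outside_sym[OF hyps(6)] hyps(8,7)]
    by (simp add: op_adj_def)
qed

lemma supported_on_mono:
  assumes "supported_on Lam d Q S" "S \<subseteq> T"
  shows "supported_on Lam d Q T"
proof (rule supported_onI)
  fix s t assume "s \<in> confs Lam d" "t \<in> confs Lam d" "\<not> agree_outside Lam T s t"
  then show "Q s t = 0"
    using supported_on_zero_outside[OF assms(1)] assms(2) unfolding agree_outside_def by blast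
next
  fix s t s' t'
  assume confs: "s \<in> confs Lam d" "t \<in> confs Lam d" "s' \<in> confs Lam d" "t' \<in> confs Lam d"
    and agree: "agree_outside Lam T s t" "agree_outside Lam T s' t'"
    and restr: "restr s T = restr s' T" "restr t T = restr t' T"
  have S_restr: "restr s S = restr s' S" "restr t S = restr t' S"
    using restr_eqD[OF restr(1)] restr_eqD[OF restr(2)] assms(2) by (auto intro!: restr_eqI)
  have "s x = t x \<longleftrightarrow> s' x = t' x" if "x \<in> Lam" for x
    using agree restr_eqD[OF restr(1), of x] restr_eqD[OF restr(2), of x] that
    by (cases "x \<in> T") (auto simp: agree_outside_def)
  then have agree_S_iff: "agree_outside Lam S s t \<longleftrightarrow> agree_outside Lam S s' t'"
    by (auto simp: agree_outside_def)
  show "Q s t = Q s' t'"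
  proof (cases "agree_outside Lam S s t")
    case True
    then show ?thesis
      using supported_on_cong[OF assms(1) confs True _ S_restr] agree_S_iff by blast
  next
    case False
    then show ?thesis
      using supported_on_zero_outside[OF assms(1)] confs agree_S_iff by simp
  qed
qed

lemma supported_on_Int:
  assumes "supported_on Lam d Q S" "supported_on Lam d Q T"
  shows "supported_on Lam d Q (S \<inter> T)"
proof (rule supported_onI)
  fix s t assume "s \<in> confs Lam d" "t \<in> confs Lam d" "\<not> agree_outside Lam (S \<inter> T) s t"
  then show "Q s t = 0"
    using supported_on_zero_outside[OF assms(1)] supported_on_zero_outside[OF assms(2)]
    unfolding agree_outside_def by blast
next
  fix s t s' t'
  assume confs: "s \<in> confs Lam d" "t \<in> confs Lam d" "s' \<in> confs Lam d" "t' \<in> confs Lam d"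
    and agree: "agree_outside Lam (S \<inter> T) s t" "agree_outside Lam (S \<inter> T) s' t'"
    and restr: "restr s (S \<inter> T) = restr s' (S \<inter> T)" "restr t (S \<inter> T) = restr t' (S \<inter> T)"
  \<comment> \<open>Pass through the hybrid configurations that look like \<open>s, t\<close> on \<open>S\<close> and like \<open>s', t'\<close> off \<open>S\<close>.\<close>
  let ?h1 = "override_on s' s S" and ?h2 = "override_on t' t S"
  have hybrid_confs: "?h1 \<in> confs Lam d" "?h2 \<in> confs Lam d"
    using confs unfolding confs_def override_on_def by auto
  have "Q s t = Q ?h1 ?h2"
    using agree by (intro supported_on_cong[OF assms(1) confs(1,2) hybrid_confs] restr_eqI)
      (auto simp: agree_outside_def override_on_def)
  also have "\<dots> = Q s' t'"
    using agree restr_eqD[OF restr(1)] restr_eqD[OF restr(2)]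
    by (intro supported_on_cong[OF assms(2) hybrid_confs confs(3,4)] restr_eqI)
      (auto simp: agree_outside_def override_on_def)
  finally show "Q s t = Q s' t'" .
qed

lemma override_on_in_confs:
  "s \<in> confs Lam d \<Longrightarrow> u \<in> confs Lam d \<Longrightarrow> override_on s u N \<in> confs Lam d"
  unfolding confs_def override_on_def by auto

lemma override_on_agree_outside:
  assumes "s \<in> confs Lam d" "u \<in> confs Lam d" "agree_outside Lam N s u"
  shows "override_on s u N = u"
proof
  fix x show "override_on s u N x = u x"
    using assms confs_outside[OF assms(1), of x] confs_outside[OF assms(2), of x]
    unfolding override_on_def agree_outside_def by (cases "x \<in> Lam") auto
qed

lemma override_on_override_on: "override_on f (override_on g h A) A = override_on f h A"
  by (simp add: override_on_def fun_eq_iff)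

lemma bij_betw_override_on_agree_outside:
  assumes "s \<in> confs Lam d" "s' \<in> confs Lam d"
  shows "bij_betw (\<lambda>u. override_on s' u N)
    {u \<in> confs Lam d. agree_outside Lam N s u} {u \<in> confs Lam d. agree_outside Lam N s' u}"
proof (rule bij_betw_byWitness[where f' = "\<lambda>u. override_on s u N"])
  show "\<forall>u\<in>{u \<in> confs Lam d. agree_outside Lam N s u}. override_on s (override_on s' u N) N = u"
    using override_on_agree_outside[OF assms(1)] by (simp add: override_on_override_on)
  show "\<forall>u\<in>{u \<in> confs Lam d. agree_outside Lam N s' u}. override_on s' (override_on s u N) N = u"
    using override_on_agree_outside[OF assms(2)] by (simp add: override_on_override_on)
qed (use assms in \<open>auto simp: override_on_in_confs, auto simp: agree_outside_def override_on_def\<close>)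

lemma supported_on_mult:
  assumes "finite Lam" "supported_on Lam d P N" "supported_on Lam d Q N"
  shows "supported_on Lam d (op_mult Lam d P Q) N"
proof (rule supported_onI)
  fix s t assume st: "s \<in> confs Lam d" "t \<in> confs Lam d" "\<not> agree_outside Lam N s t"
  have vanish: "P s u * Q u t = 0" if u: "u \<in> confs Lam d" for u
    using supported_on_zero_outside[OF assms(2) st(1) u] supported_on_zero_outside[OF assms(3) u st(2)]
      agree_outside_trans st(3) by fastforce
  show "op_mult Lam d P Q s t = 0"
    unfolding op_mult_def by (rule sum.neutral) (use vanish in blast)
next
  fix s t s' t'
  assume confs: "s \<in> confs Lam d" "t \<in> confs Lam d" "s' \<in> confs Lam d" "t' \<in> confs Lam d"
    and agree: "agree_outside Lam N s t" "agree_outside Lam N s' t'"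
    and restr: "restr s N = restr s' N" "restr t N = restr t' N"
  have only_agreeing: "op_mult Lam d P Q r v = (\<Sum>u\<in>{u \<in> confs Lam d. agree_outside Lam N r u}. P r u * Q u v)"
    if "r \<in> confs Lam d" for r v
    unfolding op_mult_def using finite_confs[OF assms(1)] supported_on_zero_outside[OF assms(2) that]
    by (intro sum.mono_neutral_right) auto
  \<comment> \<open>Reindex by replacing the part of \<open>u\<close> outside \<open>N\<close> (which is that of \<open>s\<close>) by that of \<open>s'\<close>.\<close>
  have reindex: "P s u * Q u t = P s' (override_on s' u N) * Q (override_on s' u N) t'"
    if u: "u \<in> confs Lam d" "agree_outside Lam N s u" for u
  proof -
    have u': "override_on s' u N \<in> confs Lam d" "restr (override_on s' u N) N = restr u N"
      using override_on_in_confs[OF confs(3) u(1)] by (auto simp: override_on_def intro: restr_eqI)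
    have "P s' (override_on s' u N) = P s u"
      using u u' confs by (intro supported_on_cong[OF assms(2)])
        (simp_all add: restr agree_outside_def override_on_def)
    moreover have "Q (override_on s' u N) t' = Q u t"
      using u u' confs agree by (intro supported_on_cong[OF assms(3)])
        (auto simp: restr agree_outside_def override_on_def)
    ultimately show ?thesis by simp
  qed
  have "op_mult Lam d P Q s t
      = (\<Sum>u\<in>{u \<in> confs Lam d. agree_outside Lam N s u}. P s' (override_on s' u N) * Q (override_on s' u N) t')"
    unfolding only_agreeing[OF confs(1)] by (rule sum.cong) (simp_all add: reindex)
  also have "\<dots> = op_mult Lam d P Q s' t'"
    unfolding only_agreeing[OF confs(3)]
    by (rule sum.reindex_bij_betw[OF bij_betw_override_on_agree_outside[OF confs(1,3), where N = N]])
  finally show "op_mult Lam d P Q s t = op_mult Lam d P Q s' t'" .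
qed

lemma star_algebra_supported_on:
  assumes "finite Lam" "star_algebra Lam d A"
  shows "star_algebra Lam d {P \<in> A. supported_on Lam d P N}"
  using assms(2) unfolding star_algebra_def
  by (auto intro: supported_on_zero supported_on_add supported_on_smult supported_on_adj
      supported_on_mult[OF assms(1)])

lemma supported_on_support:
  assumes "finite Lam"
  shows "supported_on Lam d Q (support Lam d Q)"
proof -
  let ?F = "{S. S \<subseteq> Lam \<and> supported_on Lam d Q S}"
  have "\<Inter>G \<in> ?F" if "finite G" "G \<noteq> {}" "G \<subseteq> ?F" for G
    using that
  proof (induction G rule: finite_ne_induct)
    case (insert S G)
    then show ?case using supported_on_Int[of Lam d Q S "\<Inter>G"] by auto
  qed simp
  moreover have "finite ?F"
    using assms by (simp add: finite_subset[of _ "Pow Lam"])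
  moreover have "Lam \<in> ?F"
    using supported_on_Lam by blast
  ultimately show ?thesis
    unfolding support_def by blast
qed

lemma support_subset: "S \<subseteq> Lam \<Longrightarrow> supported_on Lam d Q S \<Longrightarrow> support Lam d Q \<subseteq> S"
  unfolding support_def by blast

lemma supported_on_empty_imp_scalar:
  assumes "Q \<in> ops Lam d" "supported_on Lam d Q {}"
  obtains k where "Q = op_smult k (op_id Lam d)"
proof -
  obtain A where A: "\<forall>s\<in>confs Lam d. \<forall>t\<in>confs Lam d.
      Q s t = (if \<forall>x\<in>Lam. s x = t x then A (restr s {}) (restr t {}) else 0)"
    using assms(2) unfolding supported_on_def by auto
  have "Q = op_smult (A (\<lambda>_. 0) (\<lambda>_. 0)) (op_id Lam d)"
  proof (intro ext)
    fix s t
    show "Q s t = op_smult (A (\<lambda>_. 0) (\<lambda>_. 0)) (op_id Lam d) s t"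
    proof (cases "s \<in> confs Lam d \<and> t \<in> confs Lam d")
      case True
      then have "(\<forall>x\<in>Lam. s x = t x) \<longleftrightarrow> s = t"
        using confs_eqI[of s Lam d t "{}"] by (auto simp: agree_outside_def restr_def)
      then show ?thesis
        using A True by (simp add: op_smult_def op_id_def restr_def)
    next
      case False
      then show ?thesis
        using opsD[OF assms(1), of s t] by (auto simp: op_smult_def op_id_def)
    qed
  qed
  then show ?thesis by (rule that)
qed

lemma supported_on_empty_commute:
  assumes "finite Lam" "P \<in> ops Lam d" "supported_on Lam d P {}" "F \<in> ops Lam d"
  shows "op_mult Lam d F P = op_mult Lam d P F"
proof -
  obtain k where "P = op_smult k (op_id Lam d)"
    using supported_on_empty_imp_scalar[OF assms(2,3)] by blast
  then show ?thesis
    using assms(1,4)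
    by (simp add: op_mult_smult_left op_mult_smult_right op_mult_id_left op_mult_id_right)
qed

lemma bij_betw_restr_confs:
  assumes "S \<subseteq> Lam"
  shows "bij_betw (\<lambda>s. (restr s S, restr s (Lam - S))) (confs Lam d) (confs S d \<times> confs (Lam - S) d)"
proof (rule bij_betw_byWitness[where f' = "\<lambda>(\<sigma>, \<tau>). override_on \<tau> \<sigma> S"])
  show "\<forall>s\<in>confs Lam d. (\<lambda>(\<sigma>, \<tau>). override_on \<tau> \<sigma> S) (restr s S, restr s (Lam - S)) = s"
    by (auto simp: override_on_def restr_def confs_def fun_eq_iff)
  show "\<forall>p\<in>confs S d \<times> confs (Lam - S) d.
      (\<lambda>s. (restr s S, restr s (Lam - S))) ((\<lambda>(\<sigma>, \<tau>). override_on \<tau> \<sigma> S) p) = p"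
    by (auto simp: override_on_def restr_def confs_def fun_eq_iff)
  show "(\<lambda>s. (restr s S, restr s (Lam - S))) ` confs Lam d \<subseteq> confs S d \<times> confs (Lam - S) d"
    using assms by (auto simp: restr_def confs_def)
  show "(\<lambda>(\<sigma>, \<tau>). override_on \<tau> \<sigma> S) ` (confs S d \<times> confs (Lam - S) d) \<subseteq> confs Lam d"
    using assms by (auto simp: override_on_def confs_def)
qed

lemma sum_confs_split:
  fixes f g :: "'a cfg \<Rightarrow> 'b::semiring_0"
  assumes "S \<subseteq> Lam"
  shows "(\<Sum>s\<in>confs Lam d. f (restr s S) * g (restr s (Lam - S)))
       = (\<Sum>\<sigma>\<in>confs S d. f \<sigma>) * (\<Sum>\<tau>\<in>confs (Lam - S) d. g \<tau>)"
proof -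
  have "(\<Sum>s\<in>confs Lam d. f (restr s S) * g (restr s (Lam - S)))
      = (\<Sum>p\<in>confs S d \<times> confs (Lam - S) d. f (fst p) * g (snd p))"
    using sum.reindex_bij_betw[OF bij_betw_restr_confs[OF assms], of "\<lambda>p. f (fst p) * g (snd p)"]
    by simp
  also have "\<dots> = (\<Sum>\<sigma>\<in>confs S d. \<Sum>\<tau>\<in>confs (Lam - S) d. f \<sigma> * g \<tau>)"
    by (simp add: sum.cartesian_product split_def)
  also have "\<dots> = (\<Sum>\<sigma>\<in>confs S d. f \<sigma>) * (\<Sum>\<tau>\<in>confs (Lam - S) d. g \<tau>)"
    by (simp add: sum_product)
  finally show ?thesis .
qed

lemma supported_on_diagonal:
  assumes "supported_on Lam d Q S"
  obtains \<alpha> where "\<And>s. s \<in> confs Lam d \<Longrightarrow> Q s s = \<alpha> (restr s S)"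
proof -
  obtain A where "\<forall>s\<in>confs Lam d. \<forall>t\<in>confs Lam d.
      Q s t = (if \<forall>x\<in>Lam - S. s x = t x then A (restr s S) (restr t S) else 0)"
    using assms unfolding supported_on_def by auto
  then show ?thesis
    by (intro that[of "\<lambda>\<sigma>. A \<sigma> \<sigma>"]) simp
qed

lemma op_mult_diagonal_complementary:
  assumes "supported_on Lam d X S" "supported_on Lam d P (Lam - S)" "s \<in> confs Lam d" "finite Lam"
  shows "op_mult Lam d X P s s = X s s * P s s"
proof -
  have vanish: "X s u * P u s = 0" if "u \<in> confs Lam d" "u \<noteq> s" for u
  proof (cases "agree_outside Lam S s u")
    case True
    have "\<not> agree_outside Lam (Lam - S) u s"
      using confs_eq_if_agree_outside_complement[OF assms(3) that(1) True] agree_outside_sym that(2)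
      by blast
    then show ?thesis using supported_on_zero_outside[OF assms(2) that(1) assms(3)] by simp
  next
    case False
    then show ?thesis using supported_on_zero_outside[OF assms(1) assms(3) that(1)] by simp
  qed
  have "op_mult Lam d X P s s = (\<Sum>u\<in>confs Lam d. if u = s then X s s * P s s else 0)"
    unfolding op_mult_def by (rule sum.cong) (simp_all add: vanish)
  then show ?thesis
    using assms(3) finite_confs[OF assms(4)] by simp
qed

lemma op_trace_mult_complementary:
  assumes "finite Lam" "S \<subseteq> Lam" "supported_on Lam d X S" "supported_on Lam d P (Lam - S)"
  shows "op_trace Lam d (op_mult Lam d X P) * op_trace Lam d (op_id Lam d)
       = op_trace Lam d X * op_trace Lam d P"
proof -
  obtain \<alpha> where \<alpha>: "\<And>s. s \<in> confs Lam d \<Longrightarrow> X s s = \<alpha> (restr s S)"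
    using supported_on_diagonal[OF assms(3)] by blast
  obtain \<beta> where \<beta>: "\<And>s. s \<in> confs Lam d \<Longrightarrow> P s s = \<beta> (restr s (Lam - S))"
    using supported_on_diagonal[OF assms(4)] by blast
  define one :: "'a cfg \<Rightarrow> complex" where "one = (\<lambda>_. 1)"
  have "op_trace Lam d (op_mult Lam d X P) = (\<Sum>s\<in>confs Lam d. \<alpha> (restr s S) * \<beta> (restr s (Lam - S)))"
    unfolding op_trace_def
    by (rule sum.cong) (simp_all add: op_mult_diagonal_complementary[OF assms(3,4) _ assms(1)] \<alpha> \<beta>)
  moreover have "op_trace Lam d X = (\<Sum>s\<in>confs Lam d. \<alpha> (restr s S) * one (restr s (Lam - S)))"
    unfolding op_trace_def by (rule sum.cong) (simp_all add: \<alpha> one_def)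
  moreover have "op_trace Lam d P = (\<Sum>s\<in>confs Lam d. one (restr s S) * \<beta> (restr s (Lam - S)))"
    unfolding op_trace_def by (rule sum.cong) (simp_all add: \<beta> one_def)
  moreover have "op_trace Lam d (op_id Lam d) = (\<Sum>s\<in>confs Lam d. one (restr s S) * one (restr s (Lam - S)))"
    unfolding op_trace_def op_id_def one_def by simp
  ultimately show ?thesis
    by (simp only: sum_confs_split[OF assms(2)] mult_ac)
qed

section \<open>Visible simplicity\<close>

lemma subset_nbhd: "0 \<le> l \<Longrightarrow> S \<subseteq> Lam \<Longrightarrow> S \<subseteq> nbhd Lam l S"
  unfolding nbhd_def by force

lemma visibly_simple_supported_on_complement:
  assumes "finite Lam" "visibly_simple Lam d l A" "A \<subseteq> ops Lam d" "P \<in> A"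
    and "\<forall>F\<in>A. supported_on Lam d F (nbhd Lam l S) \<longrightarrow> op_mult Lam d P F = op_mult Lam d F P"
  shows "supported_on Lam d P (Lam - S)"
proof -
  have "support Lam d P \<inter> S = {}"
  proof (rule ccontr)
    assume "support Lam d P \<inter> S \<noteq> {}"
    then obtain x where x: "x \<in> support Lam d P" "x \<in> S" by blast
    then obtain F where F: "F \<in> A" "supported_on Lam d F (nbhd Lam l {x})" "commutator Lam d P F \<noteq> zero_op"
      using assms(2,4) unfolding visibly_simple_def by blast
    have "nbhd Lam l {x} \<subseteq> nbhd Lam l S"
      using x(2) unfolding nbhd_def by blast
    then show False
      using assms(5) F supported_on_mono commutator_eq_zero_iff by blast
  qed
  moreover have "support Lam d P \<subseteq> Lam"
    using support_subset[OF order_refl supported_on_Lam] .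
  ultimately show ?thesis
    using supported_on_mono[OF supported_on_support[OF assms(1)]] by blast
qed

lemma visibly_simple_negative_imp_supported_on_empty:
  assumes "finite Lam" "l < 0" "visibly_simple Lam d l A" "A \<subseteq> ops Lam d" "X \<in> A"
  shows "supported_on Lam d X {}"
proof -
  have "nbhd Lam l Lam = {}"
    using assms(2) unfolding nbhd_def by (auto simp: not_le intro: less_le_trans[OF _ zero_le_dist])
  then have "supported_on Lam d X (Lam - Lam)"
    using assms(4,5)
    by (intro visibly_simple_supported_on_complement[OF assms(1,3-5)])
      (auto intro!: supported_on_empty_commute[OF assms(1)])
  then show ?thesis by simp
qed

lemma trace_factorization_if_commutes_near:
  assumes "finite Lam" "star_algebra Lam d A" "visibly_simple Lam d l A" "Q \<in> ops Lam d"
    and "X \<in> A" "S \<subseteq> Lam" "supported_on Lam d X S"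
    and "\<forall>P\<in>A. supported_on Lam d P (nbhd Lam l S) \<longrightarrow> op_mult Lam d Q P = op_mult Lam d P Q"
  shows "op_trace Lam d (op_mult Lam d X Q) * op_trace Lam d (op_id Lam d)
       = op_trace Lam d X * op_trace Lam d Q"
proof -
  have A_ops: "A \<subseteq> ops Lam d"
    using assms(2) unfolding star_algebra_def by blast
  show ?thesis
  proof (cases "l < 0")
    case True
    then have "supported_on Lam d X {}"
      using visibly_simple_negative_imp_supported_on_empty[OF assms(1) _ assms(3) A_ops assms(5)] by blast
    then show ?thesis
      using op_trace_mult_complementary[OF assms(1), of "{}" d X Q] supported_on_Lam[of Lam d Q] by simp
  next
    case False
    define B where "B = {P \<in> A. supported_on Lam d P (nbhd Lam l S)}"
    have "X \<in> B"
      unfolding B_def using assms(5) supported_on_mono[OF assms(7) subset_nbhd[OF _ assms(6)]] False by simp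
    have "star_algebra Lam d B"
      unfolding B_def by (rule star_algebra_supported_on[OF assms(1,2)])
    moreover have "\<forall>b\<in>B. op_mult Lam d Q b = op_mult Lam d b Q"
      using assms(8) unfolding B_def by (auto simp: eq_commute)
    ultimately obtain P c where P: "P \<in> B" "\<And>b. b \<in> B \<Longrightarrow> op_mult Lam d P b = op_mult Lam d b P"
      and traces: "\<And>Z. Z \<in> B \<Longrightarrow>
          op_trace Lam d (op_mult Lam d Z Q) = op_trace Lam d (op_mult Lam d Z P) + c * op_trace Lam d Z"
        "op_trace Lam d Q = op_trace Lam d P + c * op_trace Lam d (op_id Lam d)"
      using commutant_conditional_expectation[OF assms(1) _ assms(4)] by blast
    have "supported_on Lam d P (Lam - S)"
      using P unfolding B_def by (intro visibly_simple_supported_on_complement[OF assms(1,3) A_ops]) auto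
    then show ?thesis
      using op_trace_mult_complementary[OF assms(1,6,7)]
      unfolding traces(1)[OF \<open>X \<in> B\<close>] traces(2) by (simp add: algebra_simps)
  qed
qed

theorem mainTheorem20:
  fixes Lam :: "'a::metric_space set" and d :: "'a \<Rightarrow> nat" and l :: real
    and A :: "'a qop set" and Q X :: "'a qop" and S :: "'a set"
  assumes "finite Lam"
    and "\<forall>x\<in>Lam. 0 < d x"
    and "star_algebra Lam d A"
    and "visibly_simple Lam d l A"
    and "Q \<in> ops Lam d"
    and "X \<in> A"
    and "S \<subseteq> Lam"
    and "supported_on Lam d X S"
    and "op_trace Lam d (op_mult Lam d X Q) * op_trace Lam d (op_id Lam d)
           \<noteq> op_trace Lam d X * op_trace Lam d Q"
  shows "\<exists>P\<in>A. supported_on Lam d P (nbhd Lam l S) \<and> commutator Lam d Q P \<noteq> zero_op"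
proof (rule ccontr)
  assume "\<not> (\<exists>P\<in>A. supported_on Lam d P (nbhd Lam l S) \<and> commutator Lam d Q P \<noteq> zero_op)"
  then have "\<forall>P\<in>A. supported_on Lam d P (nbhd Lam l S) \<longrightarrow> op_mult Lam d Q P = op_mult Lam d P Q"
    using commutator_eq_zero_iff by blast
  then have "op_trace Lam d (op_mult Lam d X Q) * op_trace Lam d (op_id Lam d)
      = op_trace Lam d X * op_trace Lam d Q"
    by (rule trace_factorization_if_commutes_near[OF assms(1,3-8)])
  with assms(9) show False by contradiction
qed

end
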